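(* Let $F$ be the blow up of $\mathbb P^3$ along a line, with notation as in the context. A cycle $\alpha\xi^2+\beta\xi f\in A^2(F)$ lies in $\mathrm{Mov}(F)$ if and only if $\alpha\ge0$ and $\beta\ge0$.
   Context: $F\cong\mathbb P(\mathcal O_{\mathbb P^1}^{\oplus2}\oplus\mathcal O_{\mathbb P^1}(1))$ is the blow up of $\mathbb P^3$ along a line, with projection $\pi\colon F\to\mathbb P^1$; $\xi$ is the class of the tautological bundle (pullback of $\mathcal O_{\mathbb P^3}(1)$), $f$ the class of $\pi^*\mathcal O_{\mathbb P^1}(1)$; $A(F)\cong\mathbb Z[\xi,f]/(f^2,\xi^3-\xi^2f)$, $\xi^2f$ the class of a point. $\mathrm{Mov}(F)\subseteq A^2(F)\otimes\mathbb R$ is the dual of the pseudo-effective cone: the closure of the set of cycles $\zeta$ with $\zeta\cdot D\ge0$ for every effective divisor $D$. *)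

theory Defs
  imports "HOL-Analysis.Analysis"
begin

(* F = Bl_L P^3 = P(O + O + O(1)) over P^1.
   A^1(F) = Z xi + Z f, encoded as pairs (a,b) meaning a*xi + b*f.
   A^2(F) (x) R = R xi^2 + R xi f, encoded as pairs (alpha,beta) meaning
   alpha*xi^2 + beta*xi*f.
   A(F) = Z[xi,f]/(f^2, xi^3 - xi^2 f), xi^2 f = class of a point. *)

(* degree of the monomial xi^i f^j of codimension i+j = 3 in A^3(F) = Z*pt,
   read off from the relations f^2 = 0, xi^3 = xi^2 f = pt *)
definition top_deg :: "nat \<Rightarrow> nat \<Rightarrow> int" where
  "top_deg i j = (if i + j = 3 \<and> j \<le> 1 then 1 else 0)"

definition inter :: "int \<times> int \<Rightarrow> real \<times> real \<Rightarrow> real" where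
  "inter D z = (case D of (a,b) \<Rightarrow> case z of (\<alpha>,\<beta>) \<Rightarrow>
      of_int a * \<alpha> * of_int (top_deg 3 0) + of_int a * \<beta> * of_int (top_deg 2 1)
    + of_int b * \<alpha> * of_int (top_deg 2 1) + of_int b * \<beta> * of_int (top_deg 1 2))"

(* F is the toric variety
   { ([x0:x1:x2:x3],[s:t]) | x0 t = x1 s } with Cox ring k[s,t,e,x2,x3],
   x0 = e s, x1 = e t; the generators s,t have class f, e (the exceptional
   divisor) has class xi - f, and x2,x3 have class xi.  A class D is the class
   of an effective divisor iff H^0(F, O(D)) /= 0, i.e. iff the graded piece of
   the Cox ring of degree D contains a (nonzero) monomial
   s^p t^q e^m x2^i x3^j, of class (m+i+j) xi + (p+q-m) f. *)
definition effective_class :: "int \<times> int \<Rightarrow> bool" where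
  "effective_class D \<longleftrightarrow> (\<exists>p q m i j :: nat.
      D = (int m + int i + int j, int p + int q - int m))"

definition Mov :: "(real \<times> real) set" where
  "Mov = closure {z. \<forall>D. effective_class D \<longrightarrow> inter D z \<ge> 0}"

end

theory Submission
  imports Defs
begin

text \<open>The effective cone of \<open>F\<close> is spanned by the fibre class \<open>f\<close>, the exceptional divisor
  \<open>\<xi> - f\<close> and \<open>\<xi> = (\<xi> - f) + f\<close>. Against \<open>\<alpha>\<xi>\<^sup>2 + \<beta>\<xi>f\<close> the first two have degrees
  \<open>\<alpha>\<close> and \<open>\<beta>\<close>, so the dual of the effective cone is the closed quadrant, which is its
  own closure.\<close>

lemma inter_eq: "inter (a, b) (\<alpha>, \<beta>) = of_int a * (\<alpha> + \<beta>) + of_int b * \<alpha>"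
  by (simp add: inter_def top_deg_def algebra_simps)

lemma effective_class_fibre: "effective_class (0, 1)"
  unfolding effective_class_def by (rule exI[of _ 1], intro exI[of _ 0]) simp

lemma effective_class_exceptional: "effective_class (1, -1)"
  unfolding effective_class_def by (intro exI[of _ 0] exI[of _ 1]) simp

lemma inter_effective_class_nonneg:
  assumes "effective_class (a, b)" and "\<alpha> \<ge> 0" and "\<beta> \<ge> 0"
  shows "inter (a, b) (\<alpha>, \<beta>) \<ge> 0"
proof -
  from assms(1) obtain p q m i j :: nat
    where a: "a = int m + int i + int j" and b: "b = int p + int q - int m"
    unfolding effective_class_def by auto
  have "inter (a, b) (\<alpha>, \<beta>) = real (i + j) * (\<alpha> + \<beta>) + real m * \<beta> + real (p + q) * \<alpha>"
    unfolding inter_eq a b by (simp add: algebra_simps)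
  then show ?thesis using assms(2,3) by simp
qed

lemma dual_effective_cone_eq:
  "{z. \<forall>D. effective_class D \<longrightarrow> inter D z \<ge> 0} = {0::real..} \<times> {0::real..}"
proof (intro set_eqI iffI)
  fix z :: "real \<times> real"
  assume "z \<in> {z. \<forall>D. effective_class D \<longrightarrow> inter D z \<ge> 0}"
  then have "inter (0, 1) z \<ge> 0" "inter (1, -1) z \<ge> 0"
    using effective_class_fibre effective_class_exceptional by blast+
  then show "z \<in> {0..} \<times> {0..}"
    by (cases z) (simp add: inter_eq)
next
  fix z :: "real \<times> real"
  assume "z \<in> {0..} \<times> {0..}"
  then obtain \<alpha> \<beta> where z: "z = (\<alpha>, \<beta>)" and "\<alpha> \<ge> 0" "\<beta> \<ge> 0" by auto
  then show "z \<in> {z. \<forall>D. effective_class D \<longrightarrow> inter D z \<ge> 0}"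
    by (auto simp: z inter_effective_class_nonneg)
qed

lemma Mov_eq: "Mov = {0..} \<times> {0..}"
  unfolding Mov_def dual_effective_cone_eq by (simp add: closed_Times closure_closed)

theorem corollary4p2:
  fixes \<alpha> \<beta> :: real
  shows "(\<alpha>, \<beta>) \<in> Mov \<longleftrightarrow> \<alpha> \<ge> 0 \<and> \<beta> \<ge> 0"
  by (simp add: Mov_eq)

end
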